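(* Let $$D_6=\begin{bmatrix}1&1&1&1&1&1\\1&-1&\mathrm{i}&-\mathrm{i}&-\mathrm{i}&\mathrm{i}\\1&\mathrm{i}&-1&\mathrm{i}&-\mathrm{i}&-\mathrm{i}\\1&-\mathrm{i}&\mathrm{i}&-1&\mathrm{i}&-\mathrm{i}\\1&-\mathrm{i}&-\mathrm{i}&\mathrm{i}&-1&\mathrm{i}\\1&\mathrm{i}&-\mathrm{i}&-\mathrm{i}&\mathrm{i}&-1\end{bmatrix},$$ and for $c\in\mathbb{R}$ let $R(c)\in M^{6\times 6}(\mathbb{R})$ be the matrix with $[R(c)]_{3,4}=[R(c)]_{3,5}=[R(c)]_{6,4}=[R(c)]_{6,5}=c$, $[R(c)]_{4,3}=[R(c)]_{4,6}=[R(c)]_{5,3}=[R(c)]_{5,6}=-c$, and all other entries $0$. Let $D_6^{(1)}(c)=D_6\circ \mathrm{EXP}(\mathrm{i}R(c))$, which is a complex Hadamard matrix for every $c\in\mathbb{R}$. Then $d\big(D_6^{(1)}(c)\big)=4$ for every $c\in\mathbb{R}$.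
   Context: $\circ$ denotes the entrywise (Hadamard) product and $[\mathrm{EXP}(\mathrm{i}R)]_{j,k}=e^{\mathrm{i}[R]_{j,k}}$. A complex Hadamard matrix of order $d$ is $H\in M^{d\times d}(\mathbb{C})$ with all entries of modulus $1$ and $HH^*=dI_d$. The defect $d(H)$ of a $d\times d$ complex Hadamard matrix $H$ is the dimension of the real vector space of matrices $R\in M^{d\times d}(\mathbb{R})$ satisfying: $[R]_{i,1}=0$ for $1\le i\le d$; $[R]_{1,j}=0$ for $2\le j\le d$; and $\sum_{k=1}^d [H]_{i,k}\overline{[H]_{j,k}}\big([R]_{i,k}-[R]_{j,k}\big)=0$ for all $1\le i<j\le d$. *)

theory Defs
  imports "HOL-Analysis.Analysis" "HOL-Library.Numeral_Type"
begin

text \<open>Square matrices of order d are rendered as elements of \<open>'a^'n^'n\<close> with a finite,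
  well-ordered index type \<open>'n\<close> of cardinality d; row/column 1 of the paper is the least index.\<close>

definition first_idx :: "'n::{finite,wellorder}" where
  "first_idx = (LEAST k. True)"

definition conj_transpose :: "complex^'n^'m \<Rightarrow> complex^'m^'n" where
  "conj_transpose H = (\<chi> i j. cnj (H $ j $ i))"

definition complex_hadamard :: "complex^'n^'n \<Rightarrow> bool" where
  "complex_hadamard H \<longleftrightarrow> (\<forall>i j. cmod (H $ i $ j) = 1) \<and>
     H ** conj_transpose H = mat (of_nat CARD('n))"

definition hadamard_prod :: "'a::times^'n^'m \<Rightarrow> 'a^'n^'m \<Rightarrow> 'a^'n^'m" (infixl "\<circ>\<^sub>H" 70) where
  "A \<circ>\<^sub>H B = (\<chi> i j. A $ i $ j * B $ i $ j)"

definition EXP_i :: "real^'n^'m \<Rightarrow> complex^'n^'m" where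
  "EXP_i R = (\<chi> i j. exp (\<i> * complex_of_real (R $ i $ j)))"

definition defect :: "((complex, 'n::{finite,wellorder}) vec, 'n) vec \<Rightarrow> nat" where
  "defect H = dim {R :: ((real, 'n) vec, 'n) vec.
      (\<forall>i. R $ i $ first_idx = 0) \<and>
      (\<forall>j. j \<noteq> first_idx \<longrightarrow> R $ first_idx $ j = 0) \<and>
      (\<forall>i j. i < j \<longrightarrow>
         (\<Sum>k\<in>UNIV. H $ i $ k * cnj (H $ j $ k) * complex_of_real (R $ i $ k - R $ j $ k)) = 0)}"

text \<open>Concrete 6x6 matrices, built from 1-based index functions as in the paper.
  The index type \<open>6\<close> has elements with representatives 0..5; \<open>pos6 i\<close> is the paper's index 1..6.\<close>
definition pos6 :: "6 \<Rightarrow> nat" where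
  "pos6 i = nat (Rep_bit0 i) + 1"

definition mat6 :: "(nat \<Rightarrow> nat \<Rightarrow> 'a) \<Rightarrow> 'a^6^6" where
  "mat6 f = (\<chi> i j. f (pos6 i) (pos6 j))"

definition D6_entries :: "nat \<Rightarrow> nat \<Rightarrow> complex" where
  "D6_entries i j =
     [[1,  1,  1,  1,  1,  1],
      [1, -1,  \<i>, -\<i>, -\<i>,  \<i>],
      [1,  \<i>, -1,  \<i>, -\<i>, -\<i>],
      [1, -\<i>,  \<i>, -1,  \<i>, -\<i>],
      [1, -\<i>, -\<i>,  \<i>, -1,  \<i>],
      [1,  \<i>, -\<i>, -\<i>,  \<i>, -1]] ! (i - 1) ! (j - 1)"

definition D6 :: "complex^6^6" where
  "D6 = mat6 D6_entries"

definition R_entries :: "real \<Rightarrow> nat \<Rightarrow> nat \<Rightarrow> real" where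
  "R_entries c i j =
     (if (i, j) \<in> {(3,4), (3,5), (6,4), (6,5)} then c
      else if (i, j) \<in> {(4,3), (4,6), (5,3), (5,6)} then - c
      else 0)"

definition Rc :: "real \<Rightarrow> real^6^6" where
  "Rc c = mat6 (R_entries c)"

definition D6_1 :: "real \<Rightarrow> complex^6^6" where
  "D6_1 c = D6 \<circ>\<^sub>H EXP_i (Rc c)"

end

theory Submission
  imports Defs
begin

text \<open>All entries of \<open>D6_1 c\<close> are \<open>\<plusminus>1\<close>, \<open>\<plusminus>\<i>\<close> or \<open>\<plusminus>\<i> cis (\<plusminus>c)\<close>, so every defect equation
  splits into two real linear equations in the entries of \<open>R\<close> with coefficients built from
  \<open>sin c\<close> and \<open>cos c\<close>. Four explicit solutions (the tangent \<open>Rc 1\<close> of the family and three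
  others) are mapped to the unit vectors of \<open>\<real>\<^sup>4\<close> by the linear map reading off
  \<open>R\<^sub>3\<^sub>4\<close>, \<open>R\<^sub>3\<^sub>4 - R\<^sub>3\<^sub>5\<close>, \<open>R\<^sub>6\<^sub>4 - R\<^sub>6\<^sub>5\<close>, \<open>R\<^sub>5\<^sub>3 - R\<^sub>5\<^sub>6\<close>. Conversely a solution on which these
  four values vanish is zero: the remaining entries are eliminated one after another, the only
  non-trivial divisions being by \<open>3 + cos c - sin c\<close> and \<open>1 + 4 cos\<^sup>2 c\<close>, which never vanish.
  So this map is an isomorphism of the defect space onto \<open>\<real>\<^sup>4\<close>.\<close>

lemma cos_times_cos:
  fixes x :: "'a::{real_normed_field,banach}"
  shows "cos x * cos x = 1 - sin x * sin x"
  using sin_cos_squared_add3[of x] by (simp add: algebra_simps)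

definition defect_space ::
    "((complex, 'n::{finite,wellorder}) vec, 'n) vec \<Rightarrow> ((real, 'n) vec, 'n) vec set" where
  "defect_space H = {R.
      (\<forall>i. R $ i $ first_idx = 0) \<and>
      (\<forall>j. j \<noteq> first_idx \<longrightarrow> R $ first_idx $ j = 0) \<and>
      (\<forall>i j. i < j \<longrightarrow>
         (\<Sum>k\<in>UNIV. H $ i $ k * cnj (H $ j $ k) * complex_of_real (R $ i $ k - R $ j $ k)) = 0)}"

lemma defect_eq_dim_defect_space: "defect H = dim (defect_space H)"
  by (simp add: defect_def defect_space_def)

lemma subspace_defect_space: "subspace (defect_space H)"
proof -
  have add: "(\<Sum>k\<in>A. z k * complex_of_real ((x + y) $ i $ k - (x + y) $ j $ k)) =
      (\<Sum>k\<in>A. z k * complex_of_real (x $ i $ k - x $ j $ k)) +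
      (\<Sum>k\<in>A. z k * complex_of_real (y $ i $ k - y $ j $ k))" for A z and x y :: "real^'n^'n" and i j
    by (simp add: sum.distrib[symmetric] algebra_simps)
  have scale: "(\<Sum>k\<in>A. z k * complex_of_real ((a *\<^sub>R x) $ i $ k - (a *\<^sub>R x) $ j $ k)) =
      complex_of_real a * (\<Sum>k\<in>A. z k * complex_of_real (x $ i $ k - x $ j $ k))"
    for A z a and x :: "real^'n^'n" and i j
    by (simp add: sum_distrib_left algebra_simps)
  show ?thesis
    unfolding subspace_def defect_space_def mem_Collect_eq add scale by auto
qed

lemma dim_eq_DIM_if_coordinates:
  fixes f :: "'a::euclidean_space \<Rightarrow> 'b::euclidean_space"
  assumes "subspace S" and "linear f" and "\<And>x. x \<in> S \<Longrightarrow> f x = 0 \<Longrightarrow> x = 0"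
    and "f ` S = UNIV"
  shows "dim S = DIM('b)"
proof -
  have "span S = S"
    using assms(1) by (rule span_eq_iff[THEN iffD2])
  moreover have "inj_on f S"
    using assms(3) linear_inj_on_iff_eq_0[OF assms(2,1)] by blast
  ultimately have "inj_on f (span S)"
    by (simp only:)
  then have "dim (f ` S) = dim S"
    by (rule dim_image_eq[OF assms(2)])
  with assms(4) show ?thesis
    by simp
qed

lemma pos6_simps: "pos6 0 = 1" "pos6 1 = 2" "pos6 2 = 3" "pos6 3 = 4" "pos6 4 = 5" "pos6 5 = 6"
  by (simp_all add: pos6_def bit0.Rep_numeral bit0.Rep_0 bit0.Rep_1)

lemma less_6_iff: "(i::6) < j \<longleftrightarrow> pos6 i < pos6 j"
  using Rep_bit0[of i] Rep_bit0[of j] by (auto simp: less_bit0_def pos6_def)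

lemma UNIV_6: "(UNIV::6 set) = {0, 1, 2, 3, 4, 5}"
  by (rule card_subset_eq[symmetric]) simp_all

lemma sum_UNIV_6: "sum f (UNIV::6 set) = f 0 + f 1 + f 2 + f 3 + f 4 + f 5"
  unfolding UNIV_6 by (simp add: add.assoc)

lemma all_6: "(\<forall>i::6. P i) \<longleftrightarrow> P 0 \<and> P 1 \<and> P 2 \<and> P 3 \<and> P 4 \<and> P 5"
proof -
  have "(\<forall>i::6. P i) \<longleftrightarrow> (\<forall>i\<in>UNIV. P i)"
    by simp
  then show ?thesis
    unfolding UNIV_6 by simp
qed

lemma all_less_6:
  "(\<forall>i j::6. i < j \<longrightarrow> P i j) \<longleftrightarrow>
     P 0 1 \<and> P 0 2 \<and> P 0 3 \<and> P 0 4 \<and> P 0 5 \<and> P 1 2 \<and> P 1 3 \<and> P 1 4 \<and> P 1 5 \<and>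
     P 2 3 \<and> P 2 4 \<and> P 2 5 \<and> P 3 4 \<and> P 3 5 \<and> P 4 5"
  by (simp add: all_6 less_6_iff pos6_simps)

lemma first_idx_6: "(first_idx :: 6) = 0"
  unfolding first_idx_def
  by (rule Least_equality) (use Rep_bit0 in \<open>auto simp: less_eq_bit0_def bit0.Rep_0\<close>)

lemma D6_1_eq:
  "D6_1 c = mat6 (\<lambda>i j.
     [[1,  1,  1,  1,  1,  1],
      [1, -1,  \<i>, -\<i>, -\<i>,  \<i>],
      [1,  \<i>, -1,  \<i> * cis c, -\<i> * cis c, -\<i>],
      [1, -\<i>,  \<i> * cis (-c), -1,  \<i>, -\<i> * cis (-c)],
      [1, -\<i>, -\<i> * cis (-c),  \<i>, -1,  \<i> * cis (-c)],
      [1,  \<i>, -\<i>, -\<i> * cis c,  \<i> * cis c, -1]] ! (i - 1) ! (j - 1))"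
  by (simp add: vec_eq_iff all_6 D6_1_def hadamard_prod_def EXP_i_def D6_def Rc_def mat6_def
      pos6_simps D6_entries_def R_entries_def cis_conv_exp)

lemmas D6_1_simps = D6_1_eq mat6_def pos6_simps

lemma complex_hadamard_D6_1: "complex_hadamard (D6_1 c)"
  by (simp add: complex_hadamard_def all_6 D6_1_simps norm_mult vec_eq_iff matrix_matrix_mult_def
      conj_transpose_def mat_def sum_UNIV_6 complex_eq_iff cos_times_cos)

lemma mem_defect_space_6_iff:
  fixes H :: "complex^6^6"
  shows "R \<in> defect_space H \<longleftrightarrow> (\<forall>i. R $ i $ 0 = 0) \<and> (\<forall>j. R $ 0 $ j = 0) \<and>
    (\<forall>i j. i < j \<longrightarrow>
       (\<Sum>k\<in>UNIV. Re (H $ i $ k * cnj (H $ j $ k)) * (R $ i $ k - R $ j $ k)) = 0 \<and>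
       (\<Sum>k\<in>UNIV. Im (H $ i $ k * cnj (H $ j $ k)) * (R $ i $ k - R $ j $ k)) = 0)"
proof -
  have first_row_col: "(\<forall>i. R $ i $ 0 = 0) \<and> (\<forall>j. j \<noteq> 0 \<longrightarrow> R $ 0 $ j = 0) \<longleftrightarrow>
      (\<forall>i. R $ i $ 0 = 0) \<and> (\<forall>j. R $ 0 $ j = 0)"
    by (auto simp: all_6)
  show ?thesis
    unfolding defect_space_def first_idx_6 mem_Collect_eq conj_assoc[symmetric] first_row_col
    by (simp add: complex_eq_iff)
qed

lemma Rc_1_mem_defect_space: "Rc 1 \<in> defect_space (D6_1 c)"
  unfolding mem_defect_space_6_iff all_less_6
  by (simp add: all_6 sum_UNIV_6 D6_1_simps Rc_def R_entries_def)

definition defect_dir_u :: "real \<Rightarrow> real^6^6" where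
  "defect_dir_u c = mat6 (\<lambda>i j. [[0, 0, 0, 0, 0, 0],
     [0, 0, - 1 / 2 + cos c / 2 - sin c / 2, 1 / 2 + cos c / 2 - sin c / 2,
            - 1 / 2 + cos c / 2 - sin c / 2, 1 / 2 + cos c / 2 - sin c / 2],
     [0, 1 / 2 - cos c / 2 - sin c / 2, - sin c, 0, - 1, 1 / 2 + cos c / 2 - sin c / 2],
     [0, - 1 / 2 - cos c / 2 - sin c / 2, - sin c, - sin c, - 1 / 2 + cos c / 2 - sin c / 2,
            1 - sin c],
     [0, 1 / 2 - cos c / 2 - sin c / 2, 1 - sin c, 1 / 2 - cos c / 2 - sin c / 2, 0, 1 - sin c],
     [0, - 1 / 2 - cos c / 2 - sin c / 2, - 1 / 2 - cos c / 2 - sin c / 2, - 1, - 1, 0]]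
     ! (i - 1) ! (j - 1))"

definition defect_dir_v :: "real \<Rightarrow> real^6^6" where
  "defect_dir_v c = mat6 (\<lambda>i j. [[0, 0, 0, 0, 0, 0],
     [0, 0, 1 / 2 - cos c / 2 + sin c / 2, 1 / 2 - cos c / 2 + sin c / 2,
            - 1 / 2 - cos c / 2 + sin c / 2, - 1 / 2 - cos c / 2 + sin c / 2],
     [0, - 1 / 2 + cos c / 2 + sin c / 2, 0, 0, 0, - 1 / 2 + cos c / 2 + sin c / 2],
     [0, - 1 / 2 + cos c / 2 + sin c / 2, sin c, sin c, - 1 / 2 - cos c / 2 + sin c / 2,
            - 1 + sin c],
     [0, 1 / 2 + cos c / 2 + sin c / 2, sin c, 1 / 2 + cos c / 2 + sin c / 2, 0, sin c],
     [0, 1 / 2 + cos c / 2 + sin c / 2, 1 / 2 - cos c / 2 + sin c / 2, 1, 0, sin c]]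
     ! (i - 1) ! (j - 1))"

definition defect_dir_w :: "real \<Rightarrow> real^6^6" where
  "defect_dir_w c = mat6 (\<lambda>i j. [[0, 0, 0, 0, 0, 0],
     [0, 0, 1, 0, 0, - 1],
     [0, - 1, 0, 0, 0, - 1],
     [0, 0, 0, sin c, - cos c, - 1],
     [0, 0, 0, cos c, - sin c, - 1],
     [0, 1, 1, 1, 1, 0]] ! (i - 1) ! (j - 1))"

lemma defect_dir_u_mem_defect_space: "defect_dir_u c \<in> defect_space (D6_1 c)"
  unfolding mem_defect_space_6_iff all_less_6
  by (simp add: all_6 sum_UNIV_6 D6_1_simps defect_dir_u_def cos_times_cos field_simps)

lemma defect_dir_v_mem_defect_space: "defect_dir_v c \<in> defect_space (D6_1 c)"
  unfolding mem_defect_space_6_iff all_less_6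
  by (simp add: all_6 sum_UNIV_6 D6_1_simps defect_dir_v_def cos_times_cos field_simps)

lemma defect_dir_w_mem_defect_space: "defect_dir_w c \<in> defect_space (D6_1 c)"
  unfolding mem_defect_space_6_iff all_less_6
  by (simp add: all_6 sum_UNIV_6 D6_1_simps defect_dir_w_def cos_times_cos field_simps)

text \<open>Indices are 0-based: \<open>R $ 2 $ 3\<close> is the paper's entry \<open>R\<^sub>3\<^sub>4\<close>.\<close>

definition defect_coords :: "real^6^6 \<Rightarrow> real \<times> real \<times> real \<times> real" where
  "defect_coords R = (R $ 2 $ 3, R $ 2 $ 3 - R $ 2 $ 4, R $ 5 $ 3 - R $ 5 $ 4, R $ 4 $ 2 - R $ 4 $ 5)"

lemma linear_defect_coords: "linear defect_coords"
  by (rule linearI) (simp_all add: defect_coords_def algebra_simps)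

lemma defect_space_D6_1_coords_eq_0:
  assumes R: "R \<in> defect_space (D6_1 c)" and coords: "defect_coords R = 0"
  shows "R = 0"
proof -
  note eq = R[unfolded mem_defect_space_6_iff, THEN conjunct2, THEN conjunct2, rule_format]
  have [simp]: "R $ i $ 0 = 0" "R $ 0 $ i = 0" for i
    using R by (simp_all add: mem_defect_space_6_iff)
  note [simp] = sum_UNIV_6 D6_1_simps less_6_iff cos_times_cos
  note pythagoras = sin_cos_squared_add3[of c]
  from coords have [simp]: "R$2$3 = 0" "R$2$4 = 0" "R$5$4 = R$5$3" "R$4$5 = R$4$2"
    by (simp_all add: defect_coords_def zero_prod_def)
  have [simp]: "R$1$1 = 0" "R$2$2 = 0" "R$2$5 = R$2$1" "R$4$4 = 0" "R$4$3 = R$4$1"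
      "R$5$5 = 0" "R$5$2 = R$5$1"
    using eq[of 0 1] eq[of 0 2] eq[of 0 4] eq[of 0 5] by simp_all
  have [simp]: "R$5$1 = - R$2$1" "R$5$3 = - R$2$1"
    using eq[of 2 5] by simp_all
  have "R$4$1 * (3 + cos c - sin c) = 0"
    using eq[of 2 4, simplified] eq[of 4 5, simplified] pythagoras by algebra
  moreover have "3 + cos c - sin c \<noteq> 0"
    using cos_ge_minus_one[of c] sin_le_one[of c] by linarith
  ultimately have [simp]: "R$4$1 = 0"
    by simp
  have [simp]: "R$2$1 = 0" "R$4$2 = 0"
    using eq[of 2 4, simplified] eq[of 4 5, simplified] pythagoras by algebra+
  have "R$1$2 * (1 + 4 * cos c ^ 2) = 0"
    using eq[of 0 1, simplified] eq[of 1 2, simplified] eq[of 1 4, simplified] eq[of 1 5, simplified]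
      pythagoras by algebra
  moreover have "1 + 4 * cos c ^ 2 \<noteq> 0"
    using zero_le_power2[of "cos c"] by linarith
  ultimately have [simp]: "R$1$2 = 0"
    by simp
  have [simp]: "R$1$3 = 0" "R$1$4 = 0" "R$1$5 = 0"
    using eq[of 0 1, simplified] eq[of 1 2, simplified] eq[of 1 4, simplified] eq[of 1 5, simplified]
      pythagoras by algebra+
  have [simp]: "R$3$1 = 0" "R$3$2 = 0" "R$3$3 = 0" "R$3$4 = 0" "R$3$5 = 0"
    using eq[of 0 3, simplified] eq[of 1 3, simplified] eq[of 2 3, simplified] eq[of 3 4, simplified]
      pythagoras by algebra+
  show ?thesis
    by (simp add: vec_eq_iff all_6)
qed

lemma dim_defect_space_D6_1: "dim (defect_space (D6_1 c)) = 4"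
proof -
  have "defect_coords ` defect_space (D6_1 c) = UNIV"
  proof (intro set_eqI iffI)
    fix p :: "real \<times> real \<times> real \<times> real"
    obtain a b d e where p: "p = (a, b, d, e)"
      by (cases p) auto
    let ?R = "a *\<^sub>R Rc 1 + b *\<^sub>R defect_dir_u c + d *\<^sub>R defect_dir_v c + e *\<^sub>R defect_dir_w c"
    have "?R \<in> defect_space (D6_1 c)"
      by (intro subspace_add[OF subspace_defect_space] subspace_scale[OF subspace_defect_space]
          Rc_1_mem_defect_space defect_dir_u_mem_defect_space defect_dir_v_mem_defect_space
          defect_dir_w_mem_defect_space)
    moreover have "p = defect_coords ?R"
      by (simp add: p defect_coords_def Rc_def R_entries_def defect_dir_u_def defect_dir_v_def
          defect_dir_w_def mat6_def pos6_simps)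
    ultimately show "p \<in> defect_coords ` defect_space (D6_1 c)"
      by (rule rev_image_eqI)
  qed simp
  with dim_eq_DIM_if_coordinates[OF subspace_defect_space linear_defect_coords
      defect_space_D6_1_coords_eq_0]
  show ?thesis
    by simp
qed

theorem mainTheorem2:
  fixes c :: real
  shows "complex_hadamard (D6_1 c) \<and> defect (D6_1 c) = 4"
  using complex_hadamard_D6_1 dim_defect_space_D6_1 by (simp add: defect_eq_dim_defect_space)

end
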